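(* Let $X$ be a non-empty complete computable metric space. Then $\mathsf{BCT}_X\equiv_W\mathsf{C_{\mathbb N}}$.
   Context: A represented space is a pair $(X,\delta_X)$ with $\delta_X:\subseteq\mathbb N^{\mathbb N}\to X$ a partial surjection. For a partial multi-valued map $f:\subseteq X\rightrightarrows Y$ between represented spaces, a realizer of $f$ is a partial function $F:\subseteq\mathbb N^{\mathbb N}\to\mathbb N^{\mathbb N}$ with $\delta_Y(F(p))\in f(\delta_X(p))$ for all $p\in\mathrm{dom}(f\circ\delta_X)$. We write $f\le_W g$ (Weihrauch reducibility) if there are computable partial functions $H,K:\subseteq\mathbb N^{\mathbb N}\to\mathbb N^{\mathbb N}$ such that for every realizer $G$ of $g$ the function $p\mapsto H\langle p,G(K(p))\rangle$ is a realizer of $f$, where $\langle\cdot,\cdot\rangle$ is a standard computable pairing on $\mathbb N^{\mathbb N}$. $\equiv_W$ is the induced equivalence. For a computable metric space $X$, $\mathcal A_-(X)$ is the set of closed subsets of $X$, where a name of $A$ is an enumeration of rational open balls (centers from the dense sequence, rational radii) whose union is $X\setminus A$; for $X=\mathbb N$: $p$ names $A$ iff $\mathbb N\setminus A=\{n:n+1\in\mathrm{range}(p)\}$. Sequences in $\mathcal A_-(X)^{\mathbb N}$ are represented by tupling names. $\mathsf{C_{\mathbb N}}:\subseteq\mathcal A_-(\mathbb N)\rightrightarrows\mathbb N$, $A\mapsto A$, on non-empty $A$. $\mathsf{BCT}_X:\subseteq\mathcal A_-(X)^{\mathbb N}\rightrightarrows\mathbb N$, $(A_i)_{i}\mapsto\{n\in\mathbb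 N: A_n\text{ has non-empty interior}\}$, defined on all sequences of closed sets with $\bigcup_i A_i=X$. *)

theory Defs
  imports "HOL-Analysis.Analysis" "HOL-Library.Nat_Bijection"
begin

fun prec :: "(nat list \<Rightarrow> nat option) \<Rightarrow> (nat list \<Rightarrow> nat option) \<Rightarrow> nat \<Rightarrow> nat list \<Rightarrow> nat option"
  where
  "prec g h 0 ys = g ys"
| "prec g h (Suc k) ys = (case prec g h k ys of None \<Rightarrow> None | Some r \<Rightarrow> h (k # r # ys))"

definition mu :: "(nat list \<Rightarrow> nat option) \<Rightarrow> nat list \<Rightarrow> nat option" where
  "mu f xs = (if \<exists>y. f (y # xs) = Some 0 \<and> (\<forall>z<y. \<exists>v. f (z # xs) = Some v \<and> v \<noteq> 0)
              then Some (LEAST y. f (y # xs) = Some 0 \<and> (\<forall>z<y. \<exists>v. f (z # xs) = Some v \<and> v \<noteq> 0))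
              else None)"

text \<open>partrec n f: f, restricted to argument lists of length n, is an n-ary partial recursive function.\<close>
inductive partrec :: "nat \<Rightarrow> (nat list \<Rightarrow> nat option) \<Rightarrow> bool" where
  pr_zero: "partrec n (\<lambda>xs. Some 0)"
| pr_succ: "partrec 1 (\<lambda>xs. Some (Suc (hd xs)))"
| pr_proj: "i < n \<Longrightarrow> partrec n (\<lambda>xs. Some (xs ! i))"
| pr_comp: "partrec m f \<Longrightarrow> length gs = m \<Longrightarrow> (\<forall>g\<in>set gs. partrec n g) \<Longrightarrow>
     partrec n (\<lambda>xs. if (\<forall>g\<in>set gs. g xs \<noteq> None) then f (map (\<lambda>g. the (g xs)) gs) else None)"
| pr_prec: "partrec n g \<Longrightarrow> partrec (n + 2) h \<Longrightarrow> partrec (n + 1) (\<lambda>xs. prec g h (hd xs) (tl xs))"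
| pr_mu: "partrec (n + 1) f \<Longrightarrow> partrec n (mu f)"
| pr_ext: "partrec n f \<Longrightarrow> (\<forall>xs. length xs = n \<longrightarrow> g xs = f xs) \<Longrightarrow> partrec n g"

definition computable_nat_fun :: "(nat \<Rightarrow> nat option) \<Rightarrow> bool" where
  "computable_nat_fun h \<longleftrightarrow> partrec 1 (\<lambda>xs. h (hd xs))"

type_synonym baire = "nat \<Rightarrow> nat"

definition prefix_code :: "baire \<Rightarrow> nat \<Rightarrow> nat" where
  "prefix_code p k = list_encode (map p [0..<k])"

text \<open>F is computable iff there is a computable e such that, for p in dom F, F(p)(i) is the
  (unique) value e(i, code of p|k) for those k where it is defined, and such k exist.
  (Equivalent to computability by a Type-2 machine on dom F.)\<close>
definition computable_baire :: "(baire \<Rightarrow> baire option) \<Rightarrow> bool" where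
  "computable_baire F \<longleftrightarrow> (\<exists>e. computable_nat_fun e \<and>
     (\<forall>p q. F p = Some q \<longrightarrow>
        (\<forall>i. (\<exists>k. e (prod_encode (i, prefix_code p k)) \<noteq> None) \<and>
             (\<forall>k v. e (prod_encode (i, prefix_code p k)) = Some v \<longrightarrow> v = q i))))"

definition bpair :: "baire \<Rightarrow> baire \<Rightarrow> baire" where
  "bpair p q = (\<lambda>n. if even n then p (n div 2) else q (n div 2))"

text \<open>A partial multi-valued map is given by a domain D and a value function f.
  Representations are partial maps baire \<Rightarrow> 'a option.\<close>
definition realizer ::
  "(baire \<Rightarrow> 'x option) \<Rightarrow> (baire \<Rightarrow> 'y option) \<Rightarrow> 'x set \<Rightarrow> ('x \<Rightarrow> 'y set) \<Rightarrow> (baire \<Rightarrow> baire option) \<Rightarrow> bool"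
  where
  "realizer \<delta>X \<delta>Y D f F \<longleftrightarrow>
     (\<forall>p x. \<delta>X p = Some x \<and> x \<in> D \<longrightarrow> (\<exists>q y. F p = Some q \<and> \<delta>Y q = Some y \<and> y \<in> f x))"

definition weihrauch_le ::
  "(baire \<Rightarrow> 'x option) \<Rightarrow> (baire \<Rightarrow> 'y option) \<Rightarrow> 'x set \<Rightarrow> ('x \<Rightarrow> 'y set) \<Rightarrow>
   (baire \<Rightarrow> 'z option) \<Rightarrow> (baire \<Rightarrow> 'w option) \<Rightarrow> 'z set \<Rightarrow> ('z \<Rightarrow> 'w set) \<Rightarrow> bool"
  where
  "weihrauch_le \<delta>X \<delta>Y D f \<delta>Z \<delta>W E g \<longleftrightarrow>
     (\<exists>H K. computable_baire H \<and> computable_baire K \<and>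
        (\<forall>G. realizer \<delta>Z \<delta>W E g G \<longrightarrow>
             realizer \<delta>X \<delta>Y D f
               (\<lambda>p. case K p of None \<Rightarrow> None
                   | Some q \<Rightarrow> (case G q of None \<Rightarrow> None | Some r \<Rightarrow> H (bpair p r)))))"

definition weihrauch_equiv ::
  "(baire \<Rightarrow> 'x option) \<Rightarrow> (baire \<Rightarrow> 'y option) \<Rightarrow> 'x set \<Rightarrow> ('x \<Rightarrow> 'y set) \<Rightarrow>
   (baire \<Rightarrow> 'z option) \<Rightarrow> (baire \<Rightarrow> 'w option) \<Rightarrow> 'z set \<Rightarrow> ('z \<Rightarrow> 'w set) \<Rightarrow> bool"
  where
  "weihrauch_equiv \<delta>X \<delta>Y D f \<delta>Z \<delta>W E g \<longleftrightarrow>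
     weihrauch_le \<delta>X \<delta>Y D f \<delta>Z \<delta>W E g \<and> weihrauch_le \<delta>Z \<delta>W E g \<delta>X \<delta>Y D f"

definition delta_nat :: "baire \<Rightarrow> nat option" where
  "delta_nat p = Some (p 0)"

definition rat_code :: "nat \<Rightarrow> real" where
  "rat_code n = (case prod_decode n of (a, b) \<Rightarrow> real_of_int (int_decode a) / real (Suc b))"

definition computable_metric_space :: "(nat \<Rightarrow> 'a::metric_space) \<Rightarrow> bool" where
  "computable_metric_space \<alpha> \<longleftrightarrow>
     closure (range \<alpha>) = UNIV \<and>
     (\<exists>g. computable_nat_fun g \<and>
        (\<forall>i j k. \<exists>v. g (prod_encode (i, prod_encode (j, k))) = Some v \<and>
                    \<bar>dist (\<alpha> i) (\<alpha> j) - rat_code v\<bar> \<le> 1 / 2 ^ k))"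

text \<open>Rational open ball with code n = <centre index, rational radius code>
  (a non-positive radius gives the empty ball, which allows naming X itself).\<close>
definition ball_code :: "(nat \<Rightarrow> 'a::metric_space) \<Rightarrow> nat \<Rightarrow> 'a set" where
  "ball_code \<alpha> n = (case prod_decode n of (c, r) \<Rightarrow> ball (\<alpha> c) (rat_code r))"

definition delta_closed :: "(nat \<Rightarrow> 'a::metric_space) \<Rightarrow> baire \<Rightarrow> 'a set option" where
  "delta_closed \<alpha> p = Some (- (\<Union>k. ball_code \<alpha> (p k)))"

definition delta_closed_seq :: "(nat \<Rightarrow> 'a::metric_space) \<Rightarrow> baire \<Rightarrow> (nat \<Rightarrow> 'a set) option" where
  "delta_closed_seq \<alpha> p = Some (\<lambda>i. - (\<Union>k. ball_code \<alpha> (p (prod_encode (i, k)))))"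

definition delta_closed_nat :: "baire \<Rightarrow> nat set option" where
  "delta_closed_nat p = Some {n. Suc n \<notin> range p}"

definition CN_dom :: "nat set set" where
  "CN_dom = {A. A \<noteq> {}}"

definition CN :: "nat set \<Rightarrow> nat set" where
  "CN A = A"

definition BCT_dom :: "(nat \<Rightarrow> 'a::topological_space set) set" where
  "BCT_dom = {As. (\<forall>i. closed (As i)) \<and> (\<Union>i. As i) = UNIV}"

definition BCT :: "(nat \<Rightarrow> 'a::topological_space set) \<Rightarrow> nat set" where
  "BCT As = {n. interior (As n) \<noteq> {}}"

end

theory Submission
  imports Defs
begin

text \<open>
  \<open>C\<^sub>\<nat> \<le>\<^sub>W BCT\<^sub>X\<close>: a name of a non-empty \<open>A \<subseteq> \<nat>\<close> is turned into the sequence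
  \<open>A\<^sub>i = X\<close> for \<open>i \<in> A\<close> and \<open>A\<^sub>i = \<emptyset>\<close> otherwise (the complement of \<open>A\<^sub>i\<close> is covered
  by ever larger balls once \<open>i\<close> is seen to be removed); any \<open>i\<close> with \<open>A\<^sub>i\<close> of
  non-empty interior lies in \<open>A\<close>.

  \<open>BCT\<^sub>X \<le>\<^sub>W C\<^sub>\<nat>\<close>: a candidate \<open>\<langle>n, c, r\<rangle>\<close> claims \<open>B(\<alpha> c, r) \<subseteq> A\<^sub>n\<close> with \<open>r > 0\<close>.
  Using the computable distance approximations, the refutable candidates can be
  enumerated (a dense point \<open>\<alpha> k\<close> certified to lie both in \<open>B(\<alpha> c, r)\<close> and in a ball
  removed from \<open>A\<^sub>n\<close>); this enumeration names a closed set of candidates.  By the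
  Baire category theorem some \<open>A\<^sub>n\<close> has interior, so an unrefuted candidate exists,
  and every unrefuted candidate yields an index \<open>n\<close> with \<open>A\<^sub>n\<close> of non-empty interior.
\<close>

section \<open>Total recursive functions\<close>

definition prc :: "nat \<Rightarrow> (nat list \<Rightarrow> nat) \<Rightarrow> bool" where
  "prc n f \<longleftrightarrow> partrec n (\<lambda>xs. Some (f xs))"

lemma prc_ext: "prc n f \<Longrightarrow> (\<And>xs. length xs = n \<Longrightarrow> g xs = f xs) \<Longrightarrow> prc n g"
  unfolding prc_def by (rule pr_ext) auto

lemma prc_ext': "prc m f \<Longrightarrow> m = n \<Longrightarrow> (\<And>xs. length xs = n \<Longrightarrow> g xs = f xs) \<Longrightarrow> prc n g"
  using prc_ext by blast

lemma prc_zero: "prc n (\<lambda>xs. 0)"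
  unfolding prc_def by (rule pr_zero)

lemma prc_proj: "i < n \<Longrightarrow> prc n (\<lambda>xs. xs ! i)"
  unfolding prc_def by (rule pr_proj)

lemma prc_succ1: "prc 1 (\<lambda>xs. Suc (xs ! 0))"
proof -
  have "prc 1 (\<lambda>xs. Suc (hd xs))" unfolding prc_def by (rule pr_succ)
  then show ?thesis by (rule prc_ext) (auto simp: length_Suc_conv)
qed

lemma prc_compL:
  assumes "prc m f" "length gs = m" "\<forall>g\<in>set gs. prc n g"
  shows "prc n (\<lambda>xs. f (map (\<lambda>g. g xs) gs))"
proof -
  let ?gs = "map (\<lambda>g xs. Some (g xs)) gs"
  have "partrec n (\<lambda>xs. if (\<forall>g\<in>set ?gs. g xs \<noteq> None) then Some (f (map (\<lambda>g. the (g xs)) ?gs)) else None)"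
    by (rule pr_comp) (use assms in \<open>auto simp: prc_def\<close>)
  moreover have "(\<lambda>xs. if (\<forall>g\<in>set ?gs. g xs \<noteq> None) then Some (f (map (\<lambda>g. the (g xs)) ?gs)) else None)
      = (\<lambda>xs. Some (f (map (\<lambda>g. g xs) gs)))"
    by (auto simp: comp_def)
  ultimately show ?thesis unfolding prc_def by simp
qed

lemma prc_comp1: "prc 1 f \<Longrightarrow> prc n g \<Longrightarrow> prc n (\<lambda>xs. f [g xs])"
  using prc_compL[of 1 f "[g]" n] by simp

lemma prc_comp2: "prc 2 f \<Longrightarrow> prc n g \<Longrightarrow> prc n h \<Longrightarrow> prc n (\<lambda>xs. f [g xs, h xs])"
  using prc_compL[of 2 f "[g,h]" n] by simp

lemma prc_reidx:
  assumes "prc m f" "length is = m" "\<forall>i\<in>set is. i < n"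
  shows "prc n (\<lambda>xs. f (map (\<lambda>i. xs ! i) is))"
proof -
  have "prc n (\<lambda>xs. f (map (\<lambda>g. g xs) (map (\<lambda>i xs. xs ! i) is)))"
    by (rule prc_compL) (use assms in \<open>auto intro: prc_proj\<close>)
  then show ?thesis by (simp add: comp_def)
qed

lemma map_nth_drop: "n = length xs \<Longrightarrow> map (\<lambda>i. xs ! i) [a..<n] = drop a xs"
  by (rule nth_equalityI) auto

lemma prc_Suc: "prc n a \<Longrightarrow> prc n (\<lambda>xs. Suc (a xs))"
  using prc_comp1[OF prc_succ1] by simp

lemma prc_const: "prc n (\<lambda>xs. c)"
  by (induction c) (auto intro: prc_zero prc_Suc)

fun natrec :: "(nat list \<Rightarrow> nat) \<Rightarrow> (nat \<Rightarrow> nat \<Rightarrow> nat list \<Rightarrow> nat) \<Rightarrow> nat \<Rightarrow> nat list \<Rightarrow> nat" where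
  "natrec g h 0 ys = g ys"
| "natrec g h (Suc k) ys = h k (natrec g h k ys) ys"

lemma prec_natrec:
  "prec (\<lambda>ys. Some (g ys)) (\<lambda>xs. Some (h (xs!0) (xs!1) (drop 2 xs))) k ys = Some (natrec g h k ys)"
  by (induction k) auto

lemma prc_natrec:
  assumes "prc n g" "prc m H" "m = n+2" "\<And>xs. length xs = n+2 \<Longrightarrow> H xs = h (xs!0) (xs!1) (drop 2 xs)"
  shows "prc (n+1) (\<lambda>xs. natrec g h (xs!0) (tl xs))"
proof -
  have H: "prc (n+2) (\<lambda>xs. h (xs!0) (xs!1) (drop 2 xs))"
    using assms(2) by (rule prc_ext') (use assms(3,4) in auto)
  have "partrec (n+1) (\<lambda>xs. prec (\<lambda>ys. Some (g ys)) (\<lambda>xs. Some (h (xs!0) (xs!1) (drop 2 xs))) (hd xs) (tl xs))"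
    by (rule pr_prec) (use assms(1) H in \<open>auto simp: prc_def\<close>)
  then have "prc (n+1) (\<lambda>xs. natrec g h (hd xs) (tl xs))"
    unfolding prc_def prec_natrec .
  then show ?thesis by (rule prc_ext) (auto simp: length_Suc_conv)
qed

lemma natrec_add: "natrec (\<lambda>ys. ys!0) (\<lambda>k r ys. Suc r) k ys = k + ys!0"
  by (induction k) auto

lemma prc_add: "prc n a \<Longrightarrow> prc n b \<Longrightarrow> prc n (\<lambda>xs. a xs + b xs)"
proof -
  have "prc (1+1) (\<lambda>xs. natrec (\<lambda>ys. ys!0) (\<lambda>k r ys. Suc r) (xs!0) (tl xs))"
    by (rule prc_natrec[where H="\<lambda>xs. Suc (xs!1)"]) (auto intro!: prc_proj prc_Suc)
  then have "prc 2 (\<lambda>xs. xs!0 + xs!1)"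
    by (rule prc_ext') (auto simp: natrec_add length_Suc_conv numeral_2_eq_2)
  then show "prc n a \<Longrightarrow> prc n b \<Longrightarrow> prc n (\<lambda>xs. a xs + b xs)"
    using prc_comp2 by fastforce
qed

lemma natrec_mult: "natrec (\<lambda>ys. 0) (\<lambda>k r ys. r + ys!0) k ys = k * ys!0"
  by (induction k) auto

lemma prc_mult: "prc n a \<Longrightarrow> prc n b \<Longrightarrow> prc n (\<lambda>xs. a xs * b xs)"
proof -
  have "prc (1+1) (\<lambda>xs. natrec (\<lambda>ys. 0) (\<lambda>k r ys. r + ys!0) (xs!0) (tl xs))"
    by (rule prc_natrec[where H="\<lambda>xs. xs!1 + xs!2"]) (auto intro!: prc_proj prc_const prc_add)
  then have "prc 2 (\<lambda>xs. xs!0 * xs!1)"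
    by (rule prc_ext') (auto simp: natrec_mult length_Suc_conv numeral_2_eq_2)
  then show "prc n a \<Longrightarrow> prc n b \<Longrightarrow> prc n (\<lambda>xs. a xs * b xs)"
    using prc_comp2 by fastforce
qed

lemma natrec_pred: "natrec (\<lambda>ys. 0) (\<lambda>k r ys. k) k ys = k - 1"
  by (induction k) auto

lemma prc_pred1: "prc 1 (\<lambda>xs. xs!0 - 1)"
proof -
  have "prc (0+1) (\<lambda>xs. natrec (\<lambda>ys. 0) (\<lambda>k r ys. k) (xs!0) (tl xs))"
    by (rule prc_natrec[where H="\<lambda>xs. xs!0"]) (auto intro: prc_proj prc_const)
  then show ?thesis by (rule prc_ext') (auto simp: natrec_pred)
qed

lemma natrec_sub: "natrec (\<lambda>ys. ys!0) (\<lambda>k r ys. r - Suc 0) k ys = ys!0 - k"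
  by (induction k) auto

lemma prc_sub: "prc n a \<Longrightarrow> prc n b \<Longrightarrow> prc n (\<lambda>xs. a xs - b xs)"
proof -
  have p: "prc 3 (\<lambda>xs. xs!1 - 1)"
    using prc_comp1[OF prc_pred1 prc_proj[of 1 3]] by simp
  have "prc (1+1) (\<lambda>xs. natrec (\<lambda>ys. ys!0) (\<lambda>k r ys. r - 1) (xs!0) (tl xs))"
    by (rule prc_natrec[OF _ p]) (auto intro: prc_proj)
  then have "prc 2 (\<lambda>xs. xs!1 - xs!0)"
    by (rule prc_ext') (auto simp: natrec_sub length_Suc_conv numeral_2_eq_2)
  then show "prc n a \<Longrightarrow> prc n b \<Longrightarrow> prc n (\<lambda>xs. a xs - b xs)"
    using prc_comp2[where g=b and h=a] by fastforce
qed

lemma natrec_tri: "natrec (\<lambda>ys. 0) (\<lambda>k r ys. Suc (r + k)) k ys = triangle k"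
  by (induction k) auto

lemma prc_tri: "prc n a \<Longrightarrow> prc n (\<lambda>xs. triangle (a xs))"
proof -
  have "prc (0+1) (\<lambda>xs. natrec (\<lambda>ys. 0) (\<lambda>k r ys. r + Suc k) (xs!0) (tl xs))"
    by (rule prc_natrec[where H="\<lambda>xs. xs!1 + Suc (xs!0)"]) (auto intro!: prc_proj prc_const prc_Suc prc_add)
  then have "prc 1 (\<lambda>xs. triangle (xs!0))" by (rule prc_ext') (auto simp: natrec_tri)
  then show "prc n a \<Longrightarrow> prc n (\<lambda>xs. triangle (a xs))"
    using prc_comp1 by fastforce
qed

lemma natrec_mod2: "natrec (\<lambda>ys. 0) (\<lambda>k r ys. Suc 0 - r) k ys = k mod 2"
  by (induction k) (auto simp: mod_Suc)

lemma prc_mod2: "prc n a \<Longrightarrow> prc n (\<lambda>xs. a xs mod 2)"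
proof -
  have "prc (0+1) (\<lambda>xs. natrec (\<lambda>ys. 0) (\<lambda>k r ys. Suc 0 - r) (xs!0) (tl xs))"
    by (rule prc_natrec[where H="\<lambda>xs. Suc 0 - xs!1"]) (auto intro!: prc_proj prc_const prc_sub)
  then have "prc 1 (\<lambda>xs. xs!0 mod 2)" by (rule prc_ext') (auto simp: natrec_mod2)
  then show "prc n a \<Longrightarrow> prc n (\<lambda>xs. a xs mod 2)"
    using prc_comp1 by fastforce
qed

lemma natrec_pow2: "natrec (\<lambda>ys. Suc 0) (\<lambda>k r ys. r + r) k ys = 2 ^ k"
  by (induction k) auto

lemma prc_pow2: "prc n a \<Longrightarrow> prc n (\<lambda>xs. 2 ^ (a xs))"
proof -
  have "prc (0+1) (\<lambda>xs. natrec (\<lambda>ys. Suc 0) (\<lambda>k r ys. r + r) (xs!0) (tl xs))"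
    by (rule prc_natrec[where H="\<lambda>xs. xs!1 + xs!1"]) (auto intro!: prc_proj prc_const prc_add)
  then have "prc 1 (\<lambda>xs. 2 ^ (xs!0))" by (rule prc_ext') (auto simp: natrec_pow2)
  then show "prc n a \<Longrightarrow> prc n (\<lambda>xs. 2 ^ (a xs))"
    using prc_comp1 by fastforce
qed

definition prb :: "nat \<Rightarrow> (nat list \<Rightarrow> bool) \<Rightarrow> bool" where
  "prb n P \<longleftrightarrow> prc n (\<lambda>xs. if P xs then 1 else 0)"

lemma prc_if: "prb n P \<Longrightarrow> prc n a \<Longrightarrow> prc n b \<Longrightarrow> prc n (\<lambda>xs. if P xs then a xs else b xs)"
proof -
  assume "prb n P" "prc n a" "prc n b"
  then have "prc n (\<lambda>xs. a xs * (if P xs then 1 else 0) + b xs * (1 - (if P xs then 1 else 0)))"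
    unfolding prb_def by (intro prc_add prc_mult prc_sub prc_const)
  then show ?thesis by (rule prc_ext) auto
qed

lemma prb_less: "prc n a \<Longrightarrow> prc n b \<Longrightarrow> prb n (\<lambda>xs. a xs < b xs)"
proof -
  assume "prc n a" "prc n b"
  then have "prc n (\<lambda>xs. 1 - (1 - (b xs - a xs)))" by (intro prc_sub prc_const)
  then show ?thesis unfolding prb_def by (rule prc_ext) auto
qed

lemma prb_not: "prb n P \<Longrightarrow> prb n (\<lambda>xs. \<not> P xs)"
proof -
  assume "prb n P"
  then have "prc n (\<lambda>xs. 1 - (if P xs then 1 else 0))" unfolding prb_def by (intro prc_sub prc_const)
  then show ?thesis unfolding prb_def by (rule prc_ext) auto
qed

lemma prb_and: "prb n P \<Longrightarrow> prb n Q \<Longrightarrow> prb n (\<lambda>xs. P xs \<and> Q xs)"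
proof -
  assume "prb n P" "prb n Q"
  then have "prc n (\<lambda>xs. (if P xs then 1 else 0) * (if Q xs then 1 else 0))"
    unfolding prb_def by (intro prc_mult)
  then show ?thesis unfolding prb_def by (rule prc_ext) auto
qed

lemma prb_or: "prb n P \<Longrightarrow> prb n Q \<Longrightarrow> prb n (\<lambda>xs. P xs \<or> Q xs)"
  using prb_not[OF prb_and[OF prb_not prb_not]] by simp

lemma prb_eq: "prc n a \<Longrightarrow> prc n b \<Longrightarrow> prb n (\<lambda>xs. a xs = b xs)"
proof -
  assume "prc n a" "prc n b"
  then have "prb n (\<lambda>xs. \<not> a xs < b xs \<and> \<not> b xs < a xs)" by (intro prb_and prb_not prb_less)
  then show ?thesis by (rule back_subst[of "prb n"]) (auto simp: fun_eq_iff)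
qed

lemma natrec_div2: "natrec (\<lambda>ys. 0) (\<lambda>k r ys. if k mod 2 = 0 then r else Suc r) k ys = k div 2"
  by (induction k) (auto, presburger)

lemma prc_div2: "prc n a \<Longrightarrow> prc n (\<lambda>xs. a xs div 2)"
proof -
  have "prc (0+1) (\<lambda>xs. natrec (\<lambda>ys. 0) (\<lambda>k r ys. if k mod 2 = 0 then r else Suc r) (xs!0) (tl xs))"
    by (rule prc_natrec[where H="\<lambda>xs. if xs!0 mod 2 = 0 then xs!1 else Suc (xs!1)"])
      (auto intro!: prc_proj prc_const prc_if prb_eq prc_mod2 prc_Suc)
  then have "prc 1 (\<lambda>xs. xs!0 div 2)" by (rule prc_ext') (auto simp: natrec_div2)
  then show "prc n a \<Longrightarrow> prc n (\<lambda>xs. a xs div 2)"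
    using prc_comp1 by fastforce
qed

text \<open>\<open>bmin P k ys\<close> is the least \<open>t < k\<close> with \<open>P (t # ys)\<close>, or \<open>k\<close> if there is none.\<close>
definition bmin :: "(nat list \<Rightarrow> bool) \<Rightarrow> nat \<Rightarrow> nat list \<Rightarrow> nat" where
  "bmin P k ys = natrec (\<lambda>ys. 0) (\<lambda>k r ys. if r \<noteq> k then r else if P (k#ys) then k else Suc k) k ys"

lemma bmin_props:
  "bmin P k ys \<le> k \<and> (bmin P k ys < k \<longrightarrow> P (bmin P k ys # ys)) \<and> (\<forall>t<bmin P k ys. \<not> P (t # ys))"
  unfolding bmin_def by (induction k) (auto simp: less_Suc_eq)

lemma bmin_lt_iff: "bmin P k ys < k \<longleftrightarrow> (\<exists>t<k. P (t # ys))"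
  using bmin_props[of P k ys] by (metis order.strict_trans2 not_less)

lemma prc_bmin:
  assumes "prb (Suc n) P" "prc n k"
  shows "prc n (\<lambda>xs. bmin P (k xs) xs)"
proof -
  have P2: "prb (n+2) (\<lambda>xs. P (xs!0 # drop 2 xs))"
  proof -
    have "prc (n+2) (\<lambda>xs. (\<lambda>xs. if P xs then 1 else 0) (map (\<lambda>i. xs ! i) (0 # [2..<n+2])))"
      by (rule prc_reidx[where m="Suc n"]) (use assms in \<open>auto simp: prb_def simp del: upt.simps\<close>)
    then show ?thesis unfolding prb_def
      by (rule prc_ext) (simp add: map_nth_drop del: upt.simps)
  qed
  have step: "prc (n+2) (\<lambda>xs. if \<not> xs!1 = xs!0 then xs!1 else if P (xs!0 # drop 2 xs) then xs!0 else Suc (xs!0))"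
    by (intro prc_if prb_not prb_eq prc_proj P2 prc_Suc) auto
  have "prc (n+1) (\<lambda>xs. natrec (\<lambda>ys. 0) (\<lambda>k r ys. if r \<noteq> k then r else if P (k#ys) then k else Suc k) (xs!0) (tl xs))"
    by (rule prc_natrec[OF prc_const step]) auto
  then have bmin: "prc (Suc n) (\<lambda>xs. bmin P (xs!0) (tl xs))"
    unfolding bmin_def by simp
  have "prc n (\<lambda>xs. (\<lambda>xs. bmin P (xs!0) (tl xs)) (map (\<lambda>g. g xs) (k # map (\<lambda>i xs. xs!i) [0..<n])))"
    by (rule prc_compL[OF bmin]) (use assms(2) in \<open>auto intro: prc_proj\<close>)
  then show ?thesis by (rule prc_ext) (simp add: comp_def map_nth_drop[where a=0, simplified])
qed

lemma prb_bex:
  assumes "prb (Suc n) P" "prc n k"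
  shows "prb n (\<lambda>xs. \<exists>t<k xs. P (t # xs))"
proof -
  have "prb n (\<lambda>xs. bmin P (k xs) xs < k xs)"
    by (intro prb_less prc_bmin assms)
  then show ?thesis by (simp add: bmin_lt_iff)
qed

text \<open>A total function restricted to a decidable domain is partial recursive:
  unbounded search for a witness of \<open>P\<close> diverges exactly outside of \<open>P\<close>.\<close>
lemma partrec_guard:
  assumes "prb n P" "prc n v"
  shows "partrec n (\<lambda>xs. if P xs then Some (v xs) else None)"
proof -
  have Pt: "prb (n+1) (\<lambda>xs. P (tl xs))"
  proof -
    have "prc (n+1) (\<lambda>xs. (\<lambda>xs. if P xs then 1 else 0) (map (\<lambda>i. xs ! i) [1..<n+1]))"
      by (rule prc_reidx[where m=n]) (use assms in \<open>auto simp: prb_def simp del: upt.simps\<close>)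
    then show ?thesis unfolding prb_def
      by (rule prc_ext) (simp add: map_nth_drop drop_Suc del: upt.simps)
  qed
  have search: "partrec n (mu (\<lambda>xs. Some (if P (tl xs) then 0 else 1)))"
    by (rule pr_mu) (use prc_if[OF Pt prc_const prc_const] in \<open>simp add: prc_def\<close>)
  have add: "prc 2 (\<lambda>xs. xs!0 + xs!1)" by (intro prc_add prc_proj) auto
  let ?gs = "[mu (\<lambda>xs. Some (if P (tl xs) then 0 else 1)), \<lambda>xs. Some (v xs)]"
  have "partrec n (\<lambda>xs. if (\<forall>g\<in>set ?gs. g xs \<noteq> None)
      then Some ((\<lambda>xs. xs!0 + xs!1) (map (\<lambda>g. the (g xs)) ?gs)) else None)"
    by (rule pr_comp[where m=2]) (use add search assms in \<open>simp_all add: prc_def\<close>)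
  moreover have "(\<lambda>xs. if (\<forall>g\<in>set ?gs. g xs \<noteq> None)
      then Some ((\<lambda>xs. xs!0 + xs!1) (map (\<lambda>g. the (g xs)) ?gs)) else None)
     = (\<lambda>xs. if P xs then Some (v xs) else None)"
    by (rule ext) (auto simp: mu_def)
  ultimately show ?thesis by simp
qed

text \<open>The diagonal of the Cantor pairing containing \<open>m\<close>, found by bounded search.\<close>
definition diag :: "nat \<Rightarrow> nat" where
  "diag m = bmin (\<lambda>ys. ys!1 < triangle (Suc (ys!0))) (Suc m) [m]"

lemma diag_bounds: "triangle (diag m) \<le> m \<and> m < triangle (diag m) + Suc (diag m)"
proof -
  let ?P = "\<lambda>ys::nat list. ys!1 < triangle (Suc (ys!0))"
  have b: "diag m < Suc m \<longrightarrow> ?P (diag m # [m])" "\<forall>t<diag m. \<not> ?P (t # [m])"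
    using bmin_props[of ?P "Suc m" "[m]"] unfolding diag_def by auto
  have lt: "diag m < Suc m"
  proof -
    have "\<exists>t<Suc m. ?P (t # [m])" by (rule exI[of _ m]) simp
    then show ?thesis unfolding diag_def using bmin_lt_iff[of ?P "Suc m" "[m]"] by blast
  qed
  then have "m < triangle (Suc (diag m))" using b by simp
  moreover have "triangle (diag m) \<le> m"
  proof (cases "diag m")
    case (Suc t)
    then have "\<not> m < triangle (Suc t)" using b by simp
    then show ?thesis using Suc by simp
  qed simp
  ultimately show ?thesis by simp
qed

lemma prod_decode_diag: "prod_decode m = (m - triangle (diag m), diag m - (m - triangle (diag m)))"
proof -
  have "prod_encode (m - triangle (diag m), diag m - (m - triangle (diag m))) = m"
    using diag_bounds[of m] by (simp add: prod_encode_def)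
  then show ?thesis by (metis prod_encode_inverse)
qed

lemma prc_diag: "prc n a \<Longrightarrow> prc n (\<lambda>xs. diag (a xs))"
proof -
  have "prc 1 (\<lambda>xs. bmin (\<lambda>ys. ys!1 < triangle (Suc (ys!0))) (Suc (xs!0)) xs)"
    by (intro prc_bmin prb_less prc_tri prc_Suc prc_proj) auto
  then have "prc 1 (\<lambda>xs. diag (xs!0))"
    unfolding diag_def by (rule prc_ext) (auto simp: length_Suc_conv)
  then show "prc n a \<Longrightarrow> prc n (\<lambda>xs. diag (a xs))"
    using prc_comp1 by fastforce
qed

lemma prc_pfst: "prc n a \<Longrightarrow> prc n (\<lambda>xs. fst (prod_decode (a xs)))"
proof -
  assume a: "prc n a"
  have "prc n (\<lambda>xs. a xs - triangle (diag (a xs)))" by (intro prc_sub prc_tri prc_diag a)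
  then show ?thesis by (rule prc_ext) (subst prod_decode_diag, simp)
qed

lemma prc_psnd: "prc n a \<Longrightarrow> prc n (\<lambda>xs. snd (prod_decode (a xs)))"
proof -
  assume a: "prc n a"
  have "prc n (\<lambda>xs. diag (a xs) - (a xs - triangle (diag (a xs))))" by (intro prc_sub prc_tri prc_diag a)
  then show ?thesis by (rule prc_ext) (subst prod_decode_diag, simp)
qed

lemma prc_penc: "prc n a \<Longrightarrow> prc n b \<Longrightarrow> prc n (\<lambda>xs. prod_encode (a xs, b xs))"
proof -
  assume "prc n a" "prc n b"
  then have "prc n (\<lambda>xs. triangle (a xs + b xs) + a xs)" by (intro prc_add prc_tri)
  then show ?thesis by (rule prc_ext) (simp add: prod_encode_def)
qed

lemma prod_decode_0: "prod_decode 0 = (0,0)"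
proof -
  have "prod_encode (0,0) = 0" by (simp add: prod_encode_def)
  then show ?thesis by (metis prod_encode_inverse)
qed

text \<open>Iterated tail and element access on codes of lists under \<^const>\<open>list_encode\<close>.\<close>
definition ltl :: "nat \<Rightarrow> nat \<Rightarrow> nat" where
  "ltl j c = ((\<lambda>c. snd (prod_decode (c - 1))) ^^ j) c"

definition lnth :: "nat \<Rightarrow> nat \<Rightarrow> nat" where
  "lnth j c = fst (prod_decode (ltl j c - 1))"

lemma natrec_ltl: "natrec (\<lambda>ys. ys!0) (\<lambda>k r ys. snd (prod_decode (r - Suc 0))) j ys = ltl j (ys!0)"
  by (induction j) (auto simp: ltl_def)

lemma prc_ltl: "prc n a \<Longrightarrow> prc n b \<Longrightarrow> prc n (\<lambda>xs. ltl (a xs) (b xs))"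
proof -
  have "prc (1+1) (\<lambda>xs. natrec (\<lambda>ys. ys!0) (\<lambda>k r ys. snd (prod_decode (r - Suc 0))) (xs!0) (tl xs))"
    by (rule prc_natrec[where H="\<lambda>xs. snd (prod_decode (xs!1 - Suc 0))"])
      (auto intro!: prc_proj prc_psnd prc_sub prc_const)
  then have "prc 2 (\<lambda>xs. ltl (xs!0) (xs!1))"
    by (rule prc_ext') (auto simp: natrec_ltl length_Suc_conv numeral_2_eq_2)
  then show "prc n a \<Longrightarrow> prc n b \<Longrightarrow> prc n (\<lambda>xs. ltl (a xs) (b xs))"
    using prc_comp2 by fastforce
qed

lemma prc_lnth: "prc n a \<Longrightarrow> prc n b \<Longrightarrow> prc n (\<lambda>xs. lnth (a xs) (b xs))"
  unfolding lnth_def by (intro prc_pfst prc_sub prc_ltl prc_const)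

lemma ltl_list_encode: "ltl j (list_encode xs) = list_encode (drop j xs)"
proof (induction j)
  case 0 then show ?case by (simp add: ltl_def)
next
  case (Suc j)
  have "ltl (Suc j) (list_encode xs) = snd (prod_decode (ltl j (list_encode xs) - 1))"
    by (simp add: ltl_def)
  also have "\<dots> = list_encode (drop (Suc j) xs)"
  proof (cases "drop j xs")
    case Nil
    then have "drop (Suc j) xs = []" by (metis drop_Suc tl_drop list.sel(2))
    then show ?thesis using Suc Nil by (simp add: prod_decode_0)
  next
    case (Cons y ys)
    then have "drop (Suc j) xs = ys" by (metis drop_Suc tl_drop list.sel(3))
    then show ?thesis using Suc Cons by simp
  qed
  finally show ?case .
qed

lemma list_encode_pos: "0 < list_encode xs \<longleftrightarrow> xs \<noteq> []"
  by (cases xs) auto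

lemma lnth_list_encode: "j < length xs \<Longrightarrow> lnth j (list_encode xs) = xs ! j"
  unfolding lnth_def ltl_list_encode by (simp add: Cons_nth_drop_Suc[symmetric])

lemma ltl_prefix: "0 < ltl j (prefix_code p k) \<longleftrightarrow> j < k"
  unfolding prefix_code_def ltl_list_encode list_encode_pos by auto

lemma lnth_prefix: "j < k \<Longrightarrow> lnth j (prefix_code p k) = p j"
  unfolding prefix_code_def by (simp add: lnth_list_encode)

section \<open>Computable functionals on Baire space\<close>

text \<open>The realizing machine waits until the prefix is long enough, which makes its
  answer on shorter prefixes undefined.\<close>
lemma computable_baire_from_prefix:
  assumes F: "prc 2 F" and L: "prc 1 (\<lambda>xs. L (xs!0))"
    and Q: "\<And>p t k. L t < k \<Longrightarrow> F [t, prefix_code p k] = Q p t"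
  shows "computable_baire (\<lambda>p. Some (Q p))"
proof -
  define e where "e y = (if ltl (L (fst (prod_decode y))) (snd (prod_decode y)) \<noteq> 0
      then Some (F [fst (prod_decode y), snd (prod_decode y)]) else None)" for y
  have "partrec 1 (\<lambda>xs. if ltl (L (fst (prod_decode (xs!0)))) (snd (prod_decode (xs!0))) \<noteq> 0
      then Some (F [fst (prod_decode (xs!0)), snd (prod_decode (xs!0))]) else None)"
  proof (rule partrec_guard)
    have bound: "prc 1 (\<lambda>xs. L (fst (prod_decode (xs!0))))"
      using prc_comp1[OF L prc_pfst[OF prc_proj[of 0 1]]] by simp
    show "prb 1 (\<lambda>xs. ltl (L (fst (prod_decode (xs!0)))) (snd (prod_decode (xs!0))) \<noteq> 0)"
      by (intro prb_not prb_eq prc_ltl bound prc_psnd prc_proj prc_const) auto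
    show "prc 1 (\<lambda>xs. F [fst (prod_decode (xs!0)), snd (prod_decode (xs!0))])"
      by (intro prc_comp2[OF F] prc_pfst prc_psnd prc_proj) auto
  qed
  then have e: "computable_nat_fun e"
    unfolding computable_nat_fun_def e_def by (rule pr_ext) (auto simp: length_Suc_conv)
  have defined: "e (prod_encode (t, prefix_code p (Suc (L t)))) \<noteq> None" for p t
    by (simp add: e_def ltl_prefix)
  have correct: "v = Q p t" if "e (prod_encode (t, prefix_code p k)) = Some v" for p t k v
    using that by (auto simp: e_def ltl_prefix Q split: if_splits)
  show ?thesis
    unfolding computable_baire_def using e defined correct by blast
qed

text \<open>The output map of a reduction to a problem with outputs in \<open>\<nat>\<close>: it applies a
  recursive \<open>h\<close> to the answer \<open>s 1\<close>, the first entry of the solution in \<open>\<langle>p, r\<rangle>\<close>.\<close>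
lemma computable_answer_map:
  assumes "prc 1 (\<lambda>xs. h (xs!0))"
  shows "computable_baire (\<lambda>s. Some (\<lambda>i. h (s 1)))"
proof (rule computable_baire_from_prefix[where L="\<lambda>y. 1" and F="\<lambda>xs. h (lnth 1 (xs!1))"])
  have "prc 2 (\<lambda>xs. lnth 1 (xs!1))" by (intro prc_lnth prc_proj prc_const) simp
  then show "prc 2 (\<lambda>xs. h (lnth 1 (xs!1)))" using prc_comp1[OF assms] by simp
qed (auto intro: prc_const simp: lnth_prefix)

lemma weihrauch_le_natI:
  assumes h: "prc 1 (\<lambda>xs. h (xs!0))"
    and \<kappa>: "computable_baire (\<lambda>p. Some (\<kappa> p))"
    and translate: "\<And>p x. \<delta>X p = Some x \<Longrightarrow> x \<in> D \<Longrightarrow>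
        \<exists>z. \<delta>Z (\<kappa> p) = Some z \<and> z \<in> E \<and> (\<forall>m\<in>g z. h m \<in> f x)"
  shows "weihrauch_le \<delta>X delta_nat D f \<delta>Z delta_nat E g"
  unfolding weihrauch_le_def
proof (intro exI conjI allI impI)
  show "computable_baire (\<lambda>s. Some (\<lambda>i. h (s 1)))" by (rule computable_answer_map[OF h])
  show "computable_baire (\<lambda>p. Some (\<kappa> p))" by (rule \<kappa>)
  fix G
  assume G: "realizer \<delta>Z delta_nat E g G"
  show "realizer \<delta>X delta_nat D f
      (\<lambda>p. case Some (\<kappa> p) of None \<Rightarrow> None
        | Some q \<Rightarrow> (case G q of None \<Rightarrow> None | Some r \<Rightarrow> Some (\<lambda>i. h (bpair p r 1))))"
    unfolding realizer_def
  proof (intro allI impI, elim conjE)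
    fix p x
    assume "\<delta>X p = Some x" "x \<in> D"
    then obtain z where z: "\<delta>Z (\<kappa> p) = Some z" "z \<in> E" "\<forall>m\<in>g z. h m \<in> f x"
      using translate by blast
    then obtain r m where r: "G (\<kappa> p) = Some r" "delta_nat r = Some m" "m \<in> g z"
      using G unfolding realizer_def by blast
    then show "\<exists>q y. (case Some (\<kappa> p) of None \<Rightarrow> None
        | Some q \<Rightarrow> (case G q of None \<Rightarrow> None | Some r \<Rightarrow> Some (\<lambda>i. h (bpair p r 1)))) = Some q \<and>
      delta_nat q = Some y \<and> y \<in> f x"
      using z by (auto simp: bpair_def delta_nat_def)
  qed
qed

section \<open>Coded rationals\<close>

definition ipos :: "nat \<Rightarrow> nat" where "ipos a = (if a mod 2 = 0 then a div 2 else 0)"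
definition ineg :: "nat \<Rightarrow> nat" where "ineg a = (if a mod 2 = 0 then 0 else Suc (a div 2))"

lemma int_decode_pn: "int_decode a = int (ipos a) - int (ineg a)"
  by (auto simp: int_decode_def sum_decode_def ipos_def ineg_def)

lemma prc_ipos: "prc n a \<Longrightarrow> prc n (\<lambda>xs. ipos (a xs))"
  unfolding ipos_def by (intro prc_if prb_eq prc_mod2 prc_div2 prc_const)

lemma prc_ineg: "prc n a \<Longrightarrow> prc n (\<lambda>xs. ineg (a xs))"
  unfolding ineg_def by (intro prc_if prb_eq prc_mod2 prc_div2 prc_const prc_Suc)

lemma rat_code_pn:
  "rat_code v = (real (ipos (fst (prod_decode v))) - real (ineg (fst (prod_decode v))))
                / real (Suc (snd (prod_decode v)))"
  by (simp add: rat_code_def int_decode_pn split: prod.splits)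

text \<open>\<open>rat_lt_margin v m w\<close> decides \<open>rat_code v + 1/2^m < rat_code w\<close> by cross-multiplication.\<close>
definition rat_lt_margin :: "nat \<Rightarrow> nat \<Rightarrow> nat \<Rightarrow> bool" where
  "rat_lt_margin v m w \<longleftrightarrow>
     ipos (fst (prod_decode v)) * Suc (snd (prod_decode w)) * 2 ^ m
     + Suc (snd (prod_decode v)) * Suc (snd (prod_decode w))
     + ineg (fst (prod_decode w)) * Suc (snd (prod_decode v)) * 2 ^ m
   < ipos (fst (prod_decode w)) * Suc (snd (prod_decode v)) * 2 ^ m
     + ineg (fst (prod_decode v)) * Suc (snd (prod_decode w)) * 2 ^ m"

lemma prb_rat_lt_margin:
  "prc n v \<Longrightarrow> prc n m \<Longrightarrow> prc n w \<Longrightarrow> prb n (\<lambda>xs. rat_lt_margin (v xs) (m xs) (w xs))"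
  unfolding rat_lt_margin_def
  by (intro prb_less prc_add prc_mult prc_ipos prc_ineg prc_pfst prc_psnd prc_Suc prc_pow2)

lemma rat_lt_margin_iff: "rat_lt_margin v m w \<longleftrightarrow> rat_code v + 1 / 2 ^ m < rat_code w"
proof -
  define p1 where "p1 = real (ipos (fst (prod_decode v)))"
  define n1 where "n1 = real (ineg (fst (prod_decode v)))"
  define p2 where "p2 = real (ipos (fst (prod_decode w)))"
  define n2 where "n2 = real (ineg (fst (prod_decode w)))"
  define B1 where "B1 = real (Suc (snd (prod_decode v)))"
  define B2 where "B2 = real (Suc (snd (prod_decode w)))"
  define P where "P = (2::real) ^ m"
  have pos: "B1 > 0" "B2 > 0" "P > 0" unfolding B1_def B2_def P_def by auto
  have "rat_lt_margin v m w \<longleftrightarrow> p1 * B2 * P + B1 * B2 + n2 * B1 * P < p2 * B1 * P + n1 * B2 * P"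
    unfolding rat_lt_margin_def p1_def n1_def p2_def n2_def B1_def B2_def P_def
    by (simp only: of_nat_less_iff[symmetric, where 'a=real] of_nat_add of_nat_mult of_nat_power) simp
  also have "\<dots> \<longleftrightarrow> (p1 - n1) * B2 * P + B1 * B2 < (p2 - n2) * B1 * P"
    by (simp add: algebra_simps)
  also have "\<dots> \<longleftrightarrow> (p1 - n1) / B1 + 1 / P < (p2 - n2) / B2"
    using pos by (simp add: field_simps)
  also have "\<dots> \<longleftrightarrow> rat_code v + 1 / 2 ^ m < rat_code w"
    unfolding rat_code_pn[of v] rat_code_pn[of w] p1_def n1_def p2_def n2_def B1_def B2_def P_def by simp
  finally show ?thesis .
qed

lemma rat_code_pos_iff: "0 < rat_code r \<longleftrightarrow> 0 < ipos (fst (prod_decode r))"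
proof -
  have "0 < rat_code r \<longleftrightarrow> 0 < int_decode (fst (prod_decode r))"
    by (simp add: rat_code_def zero_less_divide_iff split: prod.splits)
  also have "\<dots> \<longleftrightarrow> 0 < ipos (fst (prod_decode r))"
    by (auto simp: int_decode_def sum_decode_def ipos_def)
  finally show ?thesis .
qed

lemma rat_code_0: "rat_code 0 = 0"
  by (simp add: rat_code_def prod_decode_0 int_decode_def sum_decode_def)

lemma rat_code_nat: "rat_code (prod_encode (2 * k, 0)) = real k"
  by (simp add: rat_code_def int_decode_def sum_decode_def)

lemma rat_code_inv: "rat_code (prod_encode (2, N)) = 1 / real (Suc N)"
  by (simp add: rat_code_def int_decode_def sum_decode_def)

lemma ball_code_eq: "ball_code \<alpha> v = ball (\<alpha> (fst (prod_decode v))) (rat_code (snd (prod_decode v)))"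
  by (simp add: ball_code_def split: prod.splits)

section \<open>\<open>C\<^sub>\<nat>\<close> reduces to \<open>BCT\<close>\<close>

text \<open>From a name \<open>p\<close> of a closed \<open>A \<subseteq> \<nat>\<close>, a name of the sequence with \<open>A\<^sub>i = X\<close> for
  \<open>i \<in> A\<close> and \<open>A\<^sub>i = \<emptyset>\<close> otherwise: entry \<open>\<langle>i, k\<rangle>\<close> is the ball \<open>B(\<alpha> 0, k)\<close> once \<open>p\<close>
  has listed \<open>i + 1\<close> below \<open>k\<close>, and the empty ball (code 0) before that.\<close>
definition indicator_name :: "baire \<Rightarrow> nat \<Rightarrow> nat" where
  "indicator_name p y = (if \<exists>t<snd (prod_decode y). p t = Suc (fst (prod_decode y))
      then prod_encode (0, prod_encode (2 * snd (prod_decode y), 0)) else 0)"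

lemma computable_indicator_name: "computable_baire (\<lambda>p. Some (indicator_name p))"
proof (rule computable_baire_from_prefix[where L="\<lambda>y. snd (prod_decode y)"
      and F="\<lambda>xs. if \<exists>t<snd (prod_decode (xs!0)). lnth t (xs!1) = Suc (fst (prod_decode (xs!0)))
      then prod_encode (0, prod_encode (2 * snd (prod_decode (xs!0)), 0)) else 0"])
  have listed: "prb 2 (\<lambda>xs. \<exists>t<snd (prod_decode (xs!0)).
      (\<lambda>ys. lnth (ys!0) (ys!2) = Suc (fst (prod_decode (ys!1)))) (t # xs))"
    by (rule prb_bex) (intro prb_eq prc_lnth prc_proj prc_Suc prc_pfst prc_psnd; simp)+
  show "prc 2 (\<lambda>xs. if \<exists>t<snd (prod_decode (xs!0)). lnth t (xs!1) = Suc (fst (prod_decode (xs!0)))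
      then prod_encode (0, prod_encode (2 * snd (prod_decode (xs!0)), 0)) else 0)"
    by (rule prc_if) (use listed in simp, (intro prc_penc prc_mult prc_const prc_psnd prc_proj; simp)+)
  show "prc 1 (\<lambda>xs. snd (prod_decode (xs!0)))" by (intro prc_psnd prc_proj) simp
qed (auto simp: indicator_name_def lnth_prefix)

lemma indicator_name_sets:
  "- (\<Union>k. ball_code \<alpha> (indicator_name p (prod_encode (i, k)))) = (if Suc i \<in> range p then {} else UNIV)"
proof (cases "Suc i \<in> range p")
  case True
  then obtain t where t: "p t = Suc i" by auto
  have "z \<in> (\<Union>k. ball_code \<alpha> (indicator_name p (prod_encode (i, k))))" for z
  proof -
    obtain n :: nat where n: "real n > dist z (\<alpha> 0)" using reals_Archimedean2 by blast
    define k where "k = n + Suc t"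
    have "indicator_name p (prod_encode (i, k)) = prod_encode (0, prod_encode (2 * k, 0))"
      unfolding indicator_name_def using t by (auto simp: k_def)
    moreover have "dist (\<alpha> 0) z < real k" using n by (simp add: k_def dist_commute)
    ultimately have "z \<in> ball_code \<alpha> (indicator_name p (prod_encode (i, k)))"
      by (simp add: ball_code_eq rat_code_nat)
    then show ?thesis by blast
  qed
  then show ?thesis using True by auto
next
  case False
  then have "indicator_name p (prod_encode (i, k)) = 0" for k
    unfolding indicator_name_def by (auto simp: image_iff) metis
  then show ?thesis using False by (simp add: ball_code_eq prod_decode_0 rat_code_0)
qed

lemma CN_le_BCT:
  fixes \<alpha> :: "nat \<Rightarrow> 'a::metric_space"
  shows "weihrauch_le delta_closed_nat delta_nat CN_dom CN (delta_closed_seq \<alpha>) delta_nat BCT_dom BCT"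
proof (rule weihrauch_le_natI[where h="\<lambda>m. m" and \<kappa>=indicator_name])
  show "prc 1 (\<lambda>xs. xs!0)" by (rule prc_proj) simp
  show "computable_baire (\<lambda>p. Some (indicator_name p))" by (rule computable_indicator_name)
  fix p A
  assume "delta_closed_nat p = Some A" "A \<in> CN_dom"
  then have A: "A = {n. Suc n \<notin> range p}" "A \<noteq> {}" by (auto simp: delta_closed_nat_def CN_dom_def)
  define As :: "nat \<Rightarrow> 'a set" where "As = (\<lambda>i. if Suc i \<in> range p then {} else UNIV)"
  have "delta_closed_seq \<alpha> (indicator_name p) = Some As"
    unfolding delta_closed_seq_def As_def indicator_name_sets by simp
  moreover have "As \<in> BCT_dom" unfolding BCT_dom_def As_def using A by auto
  moreover have "\<forall>m\<in>BCT As. m \<in> CN A" using A by (auto simp: BCT_def CN_def As_def split: if_splits)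
  ultimately show "\<exists>As. delta_closed_seq \<alpha> (indicator_name p) = Some As \<and> As \<in> BCT_dom \<and> (\<forall>m\<in>BCT As. m \<in> CN A)"
    by blast
qed

section \<open>\<open>BCT\<close> reduces to \<open>C\<^sub>\<nat>\<close>\<close>

text \<open>A candidate \<open>x = \<langle>n, \<langle>c, r\<rangle>\<rangle>\<close> asserts \<open>B(\<alpha> c, r) \<subseteq> A\<^sub>n\<close> with \<open>r > 0\<close>;
  a witness \<open>w = \<langle>j, \<langle>k, \<langle>m\<^sub>1, m\<^sub>2\<rangle>\<rangle>\<rangle>\<close> against it names the \<open>j\<close>-th ball removed
  from \<open>A\<^sub>n\<close>, a dense point \<open>\<alpha> k\<close> and two precisions of distance approximations.\<close>
definition cand_set :: "nat \<Rightarrow> nat" where "cand_set x = fst (prod_decode x)"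
definition cand_centre :: "nat \<Rightarrow> nat" where "cand_centre x = fst (prod_decode (snd (prod_decode x)))"
definition cand_radius :: "nat \<Rightarrow> nat" where "cand_radius x = snd (prod_decode (snd (prod_decode x)))"
definition wit_ball :: "nat \<Rightarrow> nat" where "wit_ball w = fst (prod_decode w)"
definition wit_point :: "nat \<Rightarrow> nat" where "wit_point w = fst (prod_decode (snd (prod_decode w)))"
definition wit_prec1 :: "nat \<Rightarrow> nat" where
  "wit_prec1 w = fst (prod_decode (snd (prod_decode (snd (prod_decode w)))))"
definition wit_prec2 :: "nat \<Rightarrow> nat" where
  "wit_prec2 w = snd (prod_decode (snd (prod_decode (snd (prod_decode w)))))"

lemmas selector_defs = cand_set_def cand_centre_def cand_radius_def
  wit_ball_def wit_point_def wit_prec1_def wit_prec2_def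

lemma prc_selectors:
  "prc n a \<Longrightarrow> prc n (\<lambda>xs. cand_set (a xs))"
  "prc n a \<Longrightarrow> prc n (\<lambda>xs. cand_centre (a xs))"
  "prc n a \<Longrightarrow> prc n (\<lambda>xs. cand_radius (a xs))"
  "prc n a \<Longrightarrow> prc n (\<lambda>xs. wit_ball (a xs))"
  "prc n a \<Longrightarrow> prc n (\<lambda>xs. wit_point (a xs))"
  "prc n a \<Longrightarrow> prc n (\<lambda>xs. wit_prec1 (a xs))"
  "prc n a \<Longrightarrow> prc n (\<lambda>xs. wit_prec2 (a xs))"
  unfolding selector_defs by (intro prc_pfst prc_psnd; assumption)+

lemma cand_selectors:
  "cand_set (prod_encode (n, prod_encode (c, r))) = n"
  "cand_centre (prod_encode (n, prod_encode (c, r))) = c"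
  "cand_radius (prod_encode (n, prod_encode (c, r))) = r"
  by (simp_all add: selector_defs)

lemma wit_selectors:
  "wit_ball (prod_encode (j, prod_encode (k, prod_encode (m1, m2)))) = j"
  "wit_point (prod_encode (j, prod_encode (k, prod_encode (m1, m2)))) = k"
  "wit_prec1 (prod_encode (j, prod_encode (k, prod_encode (m1, m2)))) = m1"
  "wit_prec2 (prod_encode (j, prod_encode (k, prod_encode (m1, m2)))) = m2"
  by (simp_all add: selector_defs)

text \<open>\<open>approx_lt gt i j m r\<close>: the \<open>m\<close>-th approximation \<open>gt\<close> of \<open>d(\<alpha> i, \<alpha> j)\<close>
  certifies \<open>d(\<alpha> i, \<alpha> j) < r\<close> (decidable, and eventually true if the inequality holds).\<close>
definition approx_lt :: "(nat \<Rightarrow> nat) \<Rightarrow> nat \<Rightarrow> nat \<Rightarrow> nat \<Rightarrow> nat \<Rightarrow> bool" where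
  "approx_lt gt i j m r \<longleftrightarrow> rat_lt_margin (gt (prod_encode (i, prod_encode (j, m)))) m r"

text \<open>\<open>refutes gt x w v\<close>, where \<open>v\<close> is the code of the ball named by the witness:
  the radius of \<open>x\<close> is not positive, or \<open>\<alpha> k\<close> lies provably in \<open>B(\<alpha> c, r)\<close> and in \<open>v\<close>.\<close>
definition refutes :: "(nat \<Rightarrow> nat) \<Rightarrow> nat \<Rightarrow> nat \<Rightarrow> nat \<Rightarrow> bool" where
  "refutes gt x w v \<longleftrightarrow> \<not> 0 < ipos (fst (prod_decode (cand_radius x))) \<or>
      (approx_lt gt (wit_point w) (cand_centre x) (wit_prec1 w) (cand_radius x) \<and>
       approx_lt gt (wit_point w) (fst (prod_decode v)) (wit_prec2 w) (snd (prod_decode v)))"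

text \<open>The \<open>A\<^sub>-(\<nat>)\<close>-name of the set of unrefuted candidates, computed from a name \<open>p\<close>
  of the sequence \<open>(A\<^sub>i)\<close>: entry \<open>\<langle>x, w\<rangle>\<close> lists \<open>x + 1\<close> if \<open>w\<close> refutes \<open>x\<close>.\<close>
definition ball_query :: "nat \<Rightarrow> nat" where
  "ball_query t = prod_encode (cand_set (fst (prod_decode t)), wit_ball (snd (prod_decode t)))"

definition refutation_enum :: "(nat \<Rightarrow> nat) \<Rightarrow> baire \<Rightarrow> nat \<Rightarrow> nat" where
  "refutation_enum gt p t = (if refutes gt (fst (prod_decode t)) (snd (prod_decode t)) (p (ball_query t))
      then Suc (fst (prod_decode t)) else 0)"

lemma prb_refutes:
  assumes gt: "prc 1 (\<lambda>xs. gt (xs!0))" and "prc n a" "prc n b" "prc n c"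
  shows "prb n (\<lambda>xs. refutes gt (a xs) (b xs) (c xs))"
proof -
  have g: "prc n h \<Longrightarrow> prc n (\<lambda>xs. gt (h xs))" for h
    using prc_comp1[OF gt] by simp
  show ?thesis unfolding refutes_def approx_lt_def
    by (intro prb_or prb_not prb_and prb_less prb_rat_lt_margin g prc_penc prc_ipos prc_pfst prc_psnd
        prc_selectors prc_const assms)
qed

lemma computable_refutation_enum:
  assumes gt: "prc 1 (\<lambda>xs. gt (xs!0))"
  shows "computable_baire (\<lambda>p. Some (refutation_enum gt p))"
proof (rule computable_baire_from_prefix[where L=ball_query and F="\<lambda>xs.
    if refutes gt (fst (prod_decode (xs!0))) (snd (prod_decode (xs!0))) (lnth (ball_query (xs!0)) (xs!1))
    then Suc (fst (prod_decode (xs!0))) else 0"])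
  show "prc 1 (\<lambda>xs. ball_query (xs!0))"
    unfolding ball_query_def by (intro prc_penc prc_selectors prc_pfst prc_psnd prc_proj; simp)
  then have "prc 2 (\<lambda>xs. ball_query (xs!0))"
    using prc_comp1[of "\<lambda>xs. ball_query (xs!0)" 2 "\<lambda>xs. xs!0"] prc_proj[of 0 2] by simp
  then show "prc 2 (\<lambda>xs.
      if refutes gt (fst (prod_decode (xs!0))) (snd (prod_decode (xs!0))) (lnth (ball_query (xs!0)) (xs!1))
      then Suc (fst (prod_decode (xs!0))) else 0)"
    by (intro prc_if prb_refutes gt prc_pfst prc_psnd prc_lnth prc_Suc prc_const prc_proj; simp)
qed (simp add: refutation_enum_def lnth_prefix)

lemma baire_cover_interior:
  fixes As :: "nat \<Rightarrow> 'a::complete_space set"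
  assumes closed: "\<And>i. closed (As i)" and cover: "(\<Union>i. As i) = UNIV"
  shows "\<exists>n. interior (As n) \<noteq> {}"
proof (rule ccontr)
  assume "\<not> ?thesis"
  then have "euclidean interior_of \<Union> (range As) = {}"
    by (intro Baire_category_alt)
      (auto simp: completely_metrizable_space_euclidean closed closed_closedin[symmetric] euclidean_interior_of)
  then show False using cover by (simp add: euclidean_interior_of)
qed

context
  fixes \<alpha> :: "nat \<Rightarrow> 'a::complete_space" and gt :: "nat \<Rightarrow> nat"
  assumes dense: "closure (range \<alpha>) = UNIV"
    and approx: "\<And>i j k. \<bar>dist (\<alpha> i) (\<alpha> j) - rat_code (gt (prod_encode (i, prod_encode (j, k))))\<bar> \<le> 1 / 2 ^ k"
begin

lemma approx_lt_sound: "approx_lt gt i j m r \<Longrightarrow> dist (\<alpha> i) (\<alpha> j) < rat_code r"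
  using approx[of i j m] by (auto simp: approx_lt_def rat_lt_margin_iff)

lemma approx_lt_complete:
  assumes "dist (\<alpha> i) (\<alpha> j) < rat_code r"
  shows "\<exists>m. approx_lt gt i j m r"
proof -
  obtain m :: nat where m: "1 / 2 ^ m < (rat_code r - dist (\<alpha> i) (\<alpha> j)) / 2"
    using real_arch_pow_inv[of "(rat_code r - dist (\<alpha> i) (\<alpha> j)) / 2" "1/2"] assms
    by (auto simp: power_one_over)
  have "rat_code (gt (prod_encode (i, prod_encode (j, m)))) + 1 / 2 ^ m < rat_code r"
    using approx[of i j m] m by (auto simp: abs_le_iff)
  then show ?thesis by (auto simp: approx_lt_def rat_lt_margin_iff)
qed

lemma dense_point_in_open:
  assumes "open U" "z \<in> U"
  shows "\<exists>k. \<alpha> k \<in> U"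
proof -
  obtain e where e: "e > 0" "ball z e \<subseteq> U" using assms open_contains_ball by blast
  have "z \<in> closure (range \<alpha>)" using dense by simp
  then obtain k where "dist (\<alpha> k) z < e" using e by (auto simp: closure_approachable)
  then show ?thesis using e by (auto simp: dist_commute)
qed

lemma rational_ball_inside:
  assumes "y \<in> interior S"
  shows "\<exists>c N. ball (\<alpha> c) (1 / real (Suc N)) \<subseteq> S"
proof -
  obtain e where e: "e > 0" "ball y e \<subseteq> S" using assms by (auto simp: mem_interior)
  obtain N :: nat where N: "1 / real (Suc N) < e / 2"
    using reals_Archimedean[of "e / 2"] e by (auto simp: inverse_eq_divide)
  obtain c where c: "\<alpha> c \<in> ball y (e / 2)"
    using dense_point_in_open[of "ball y (e / 2)" y] e by auto
  have "ball (\<alpha> c) (1 / real (Suc N)) \<subseteq> ball y e"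
  proof
    fix z assume "z \<in> ball (\<alpha> c) (1 / real (Suc N))"
    then show "z \<in> ball y e"
      using c N dist_triangle[of y z "\<alpha> c"] by (simp add: dist_commute)
  qed
  then show ?thesis using e by blast
qed

lemma common_certified_point:
  assumes "z \<in> ball (\<alpha> c) (rat_code r)" "z \<in> ball_code \<alpha> v"
  shows "\<exists>k m1 m2. approx_lt gt k c m1 r \<and> approx_lt gt k (fst (prod_decode v)) m2 (snd (prod_decode v))"
proof -
  have "open (ball (\<alpha> c) (rat_code r) \<inter> ball_code \<alpha> v)"
    by (simp add: ball_code_eq open_Int)
  then obtain k where k: "\<alpha> k \<in> ball (\<alpha> c) (rat_code r)" "\<alpha> k \<in> ball_code \<alpha> v"
    using dense_point_in_open[of _ z] assms by blast
  obtain m1 where "approx_lt gt k c m1 r"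
    using approx_lt_complete[of k c r] k(1) by (auto simp: dist_commute)
  moreover obtain m2 where "approx_lt gt k (fst (prod_decode v)) m2 (snd (prod_decode v))"
    using approx_lt_complete[of k "fst (prod_decode v)" "snd (prod_decode v)"] k(2)
    by (auto simp: dist_commute ball_code_eq)
  ultimately show ?thesis by blast
qed

text \<open>Soundness: an unrefuted candidate \<open>x\<close> exhibits a ball inside \<open>A\<^sub>n\<close>, \<open>n = cand_set x\<close>.
  Otherwise that ball meets some removed ball, and by density and the approximations
  a witness refuting \<open>x\<close> exists.\<close>
lemma unrefuted_candidate_interior:
  fixes p :: baire
  defines "As \<equiv> (\<lambda>i. - (\<Union>k. ball_code \<alpha> (p (prod_encode (i, k)))))"
  assumes x: "Suc x \<notin> range (refutation_enum gt p)"
  shows "interior (As (cand_set x)) \<noteq> {}"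
proof -
  have unrefuted: "\<not> refutes gt x w (p (prod_encode (cand_set x, wit_ball w)))" for w
  proof -
    have "refutation_enum gt p (prod_encode (x, w)) \<noteq> Suc x" using x by (metis rangeI)
    then show ?thesis by (auto simp: refutation_enum_def ball_query_def)
  qed
  have radius: "0 < rat_code (cand_radius x)"
    using unrefuted[of 0] by (auto simp: refutes_def rat_code_pos_iff)
  have sub: "ball (\<alpha> (cand_centre x)) (rat_code (cand_radius x)) \<subseteq> As (cand_set x)"
  proof
    fix z assume z: "z \<in> ball (\<alpha> (cand_centre x)) (rat_code (cand_radius x))"
    show "z \<in> As (cand_set x)"
    proof (rule ccontr)
      assume "z \<notin> As (cand_set x)"
      then obtain j where j: "z \<in> ball_code \<alpha> (p (prod_encode (cand_set x, j)))" unfolding As_def by auto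
      define v where "v = p (prod_encode (cand_set x, j))"
      obtain k m1 m2 where "approx_lt gt k (cand_centre x) m1 (cand_radius x)"
        "approx_lt gt k (fst (prod_decode v)) m2 (snd (prod_decode v))"
        using common_certified_point z j unfolding v_def by blast
      then have "refutes gt x (prod_encode (j, prod_encode (k, prod_encode (m1, m2)))) v"
        unfolding refutes_def wit_selectors by simp
      then show False using unrefuted[of "prod_encode (j, prod_encode (k, prod_encode (m1, m2)))"]
        by (simp add: wit_selectors v_def)
    qed
  qed
  have "\<alpha> (cand_centre x) \<in> interior (As (cand_set x))"
    using radius interior_maximal[OF sub] by auto
  then show ?thesis by auto
qed

text \<open>Existence: by the Baire category theorem some \<open>A\<^sub>n\<close> contains a rational ball, and the
  corresponding candidate cannot be refuted since sound certificates never lie.\<close>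
lemma exists_unrefuted_candidate:
  fixes p :: baire
  defines "As \<equiv> (\<lambda>i. - (\<Union>k. ball_code \<alpha> (p (prod_encode (i, k)))))"
  assumes cover: "(\<Union>i. As i) = UNIV"
  shows "\<exists>x. Suc x \<notin> range (refutation_enum gt p)"
proof -
  have "closed (As i)" for i
    unfolding As_def by (intro closed_Compl open_UN) (auto simp: ball_code_eq)
  then obtain n y where "y \<in> interior (As n)" using baire_cover_interior[OF _ cover] by blast
  then obtain c N where sub: "ball (\<alpha> c) (1 / real (Suc N)) \<subseteq> As n"
    using rational_ball_inside by blast
  define x where "x = prod_encode (n, prod_encode (c, prod_encode (2, N)))"
  have "refutation_enum gt p t \<noteq> Suc x" for t
  proof
    assume refuted: "refutation_enum gt p t = Suc x"
    then have t: "fst (prod_decode t) = x" by (auto simp: refutation_enum_def split: if_splits)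
    define w where "w = snd (prod_decode t)"
    define v where "v = p (prod_encode (n, wit_ball w))"
    have "refutes gt x w v"
      using refuted unfolding refutation_enum_def ball_query_def t w_def[symmetric] v_def x_def cand_selectors
      by (simp split: if_splits)
    then have "approx_lt gt (wit_point w) c (wit_prec1 w) (prod_encode (2, N))"
      "approx_lt gt (wit_point w) (fst (prod_decode v)) (wit_prec2 w) (snd (prod_decode v))"
      by (auto simp: refutes_def x_def cand_selectors ipos_def)
    then have "\<alpha> (wit_point w) \<in> As n" "\<alpha> (wit_point w) \<in> ball_code \<alpha> v"
      using sub by (auto dest!: approx_lt_sound simp: rat_code_inv dist_commute ball_code_eq)
    then show False unfolding As_def v_def by auto
  qed
  then show ?thesis by (metis imageE)
qed

end

lemma computable_metric_space_approx:
  assumes "computable_metric_space \<alpha>"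
  obtains gt where "prc 1 (\<lambda>xs. gt (xs!0))"
    and "\<And>i j k. \<bar>dist (\<alpha> i) (\<alpha> j) - rat_code (gt (prod_encode (i, prod_encode (j, k))))\<bar> \<le> 1 / 2 ^ k"
proof -
  obtain g where g: "computable_nat_fun g" and approx: "\<And>i j k. \<exists>v. g (prod_encode (i, prod_encode (j, k))) = Some v \<and>
      \<bar>dist (\<alpha> i) (\<alpha> j) - rat_code v\<bar> \<le> 1 / 2 ^ k"
    using assms unfolding computable_metric_space_def by blast
  define gt where "gt x = the (g x)" for x
  have total: "g x = Some (gt x)" for x
  proof -
    obtain i j k where "x = prod_encode (i, prod_encode (j, k))"
      by (metis prod_decode_inverse surj_pair)
    then show ?thesis using approx[of i j k] unfolding gt_def by auto
  qed
  have "prc 1 (\<lambda>xs. gt (hd xs))"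
    using g unfolding computable_nat_fun_def prc_def total .
  then have "prc 1 (\<lambda>xs. gt (xs!0))" by (rule prc_ext) (auto simp: length_Suc_conv)
  moreover have "\<bar>dist (\<alpha> i) (\<alpha> j) - rat_code (gt (prod_encode (i, prod_encode (j, k))))\<bar> \<le> 1 / 2 ^ k" for i j k
    using approx[of i j k] total by auto
  ultimately show ?thesis using that by blast
qed

lemma BCT_le_CN:
  fixes \<alpha> :: "nat \<Rightarrow> 'a::complete_space"
  assumes cms: "computable_metric_space \<alpha>"
  shows "weihrauch_le (delta_closed_seq \<alpha>) delta_nat BCT_dom BCT delta_closed_nat delta_nat CN_dom CN"
proof -
  have dense: "closure (range \<alpha>) = UNIV" using cms by (simp add: computable_metric_space_def)
  obtain gt where gt: "prc 1 (\<lambda>xs. gt (xs!0))"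
    and approx: "\<And>i j k. \<bar>dist (\<alpha> i) (\<alpha> j) - rat_code (gt (prod_encode (i, prod_encode (j, k))))\<bar> \<le> 1 / 2 ^ k"
    using computable_metric_space_approx[OF cms] by blast
  show ?thesis
  proof (rule weihrauch_le_natI[where h=cand_set and \<kappa>="refutation_enum gt"])
    show "prc 1 (\<lambda>xs. cand_set (xs!0))" by (intro prc_selectors prc_proj) simp
    show "computable_baire (\<lambda>p. Some (refutation_enum gt p))" by (rule computable_refutation_enum[OF gt])
    fix p As
    assume "delta_closed_seq \<alpha> p = Some As" "As \<in> BCT_dom"
    then have As: "As = (\<lambda>i. - (\<Union>k. ball_code \<alpha> (p (prod_encode (i, k)))))" "(\<Union>i. As i) = UNIV"
      by (auto simp: delta_closed_seq_def BCT_dom_def)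
    define A where "A = {x. Suc x \<notin> range (refutation_enum gt p)}"
    have "delta_closed_nat (refutation_enum gt p) = Some A" by (simp add: delta_closed_nat_def A_def)
    moreover have "A \<in> CN_dom"
      using exists_unrefuted_candidate[OF dense approx] As by (auto simp: CN_dom_def A_def)
    moreover have "\<forall>x\<in>CN A. cand_set x \<in> BCT As"
      using unrefuted_candidate_interior[OF dense approx] As by (auto simp: CN_def A_def BCT_def)
    ultimately show "\<exists>A. delta_closed_nat (refutation_enum gt p) = Some A \<and> A \<in> CN_dom \<and>
        (\<forall>x\<in>CN A. cand_set x \<in> BCT As)" by blast
  qed
qed

theorem theorem5p2:
  fixes \<alpha> :: "nat \<Rightarrow> 'a::complete_space"
  assumes "computable_metric_space \<alpha>"
  shows "weihrauch_equiv (delta_closed_seq \<alpha>) delta_nat (BCT_dom :: (nat \<Rightarrow> 'a set) set) BCT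
                         delta_closed_nat delta_nat CN_dom CN"
  unfolding weihrauch_equiv_def using BCT_le_CN[OF assms] CN_le_BCT by blast
end
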